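(* Let $\Delta \ge 1$ and $\alpha > \Delta$ be integers. There is an infinite family of graphs of maximum degree $\Delta$ and an absolute constant $C>0$ such that for every graph $G=(V,E)$ in the family and every assignment of nonempty sets $L(v) \subseteq \{1,\dots,\alpha\}$ to the vertices $v\in V$ with the property that every choice of one color $\ell_v \in L(v)$ for each $v \in V$ yields a proper $\alpha$-coloring of $G$, we have $\min_{v\in V}|L(v)| \le C\alpha/\Delta$, i.e. the solution domain has size $O(\alpha/\Delta)$. Consequently the contingency factor $\alpha/\min_{v}|L(v)|$ is $\Omega(\Delta)$.
   Context: A proper $\alpha$-coloring of a graph $G=(V,E)$ is a map $\varphi:V\to\{1,\dots,\alpha\}$ with $\varphi(u)\neq\varphi(v)$ for every edge $\{u,v\}\in E$. A "generic algorithm" for $\alpha$-coloring outputs for every vertex $v$ a set $L(v)$ of candidate colors such that any selection of one color from each set is a proper $\alpha$-coloring; the vertex then privately picks one of its candidates at random. The size of the problem domain is $\alpha$ (the number of available labels), the size of the solution domain is $k=\min_v |L(v)|$, and the contingency factor is $\alpha/k$. *)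

theory Defs
  imports Complex_Main
begin

definition simple_graph :: "nat set \<Rightarrow> nat set set \<Rightarrow> bool" where
  "simple_graph V E \<longleftrightarrow> finite V \<and>
     (\<forall>e\<in>E. \<exists>u v. e = {u, v} \<and> u \<noteq> v \<and> u \<in> V \<and> v \<in> V)"

definition degree :: "nat set set \<Rightarrow> nat \<Rightarrow> nat" where
  "degree E v = card {u. {u, v} \<in> E}"

definition max_degree :: "nat set \<Rightarrow> nat set set \<Rightarrow> nat" where
  "max_degree V E = Max (degree E ` V)"

definition proper_coloring :: "nat set \<Rightarrow> nat set set \<Rightarrow> nat \<Rightarrow> (nat \<Rightarrow> nat) \<Rightarrow> bool" where
  "proper_coloring V E \<alpha> \<phi> \<longleftrightarrow> (\<forall>v\<in>V. \<phi> v \<in> {1..\<alpha>}) \<and>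
     (\<forall>u v. {u, v} \<in> E \<longrightarrow> \<phi> u \<noteq> \<phi> v)"

text \<open>Output of a generic algorithm: nonempty candidate sets in {1..alpha} such that
  every selection is a proper alpha-coloring.\<close>
definition generic_lists :: "nat set \<Rightarrow> nat set set \<Rightarrow> nat \<Rightarrow> (nat \<Rightarrow> nat set) \<Rightarrow> bool" where
  "generic_lists V E \<alpha> L \<longleftrightarrow> (\<forall>v\<in>V. L v \<noteq> {} \<and> L v \<subseteq> {1..\<alpha>}) \<and>
     (\<forall>\<phi>. (\<forall>v\<in>V. \<phi> v \<in> L v) \<longrightarrow> proper_coloring V E \<alpha> \<phi>)"

end

theory Submission
  imports Defs
begin

text \<open>Adjacent vertices must receive disjoint candidate sets, otherwise choosing a common
  colour for both is a selection that is not proper. So along a clique the candidate sets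
  are pairwise disjoint subsets of \<open>{1..\<alpha>}\<close>, and a clique on \<open>\<Delta> + 1\<close> vertices forces
  some candidate set to have at most \<open>\<alpha> / (\<Delta> + 1)\<close> colours. Disjoint unions of
  arbitrarily many complete graphs on \<open>\<Delta> + 1\<close> vertices thus form the required family,
  with \<open>C = 1\<close>.\<close>

lemma generic_lists_disjoint_if_edge:
  assumes gl: "generic_lists V E \<alpha> L" and "u \<in> V" "v \<in> V" "{u, v} \<in> E"
  shows "L u \<inter> L v = {}"
proof (rule ccontr)
  assume "L u \<inter> L v \<noteq> {}"
  then obtain c where c: "c \<in> L u" "c \<in> L v" by blast
  define \<phi> where "\<phi> x = (if x = u \<or> x = v then c else (SOME y. y \<in> L x))" for x
  have "\<phi> x \<in> L x" if "x \<in> V" for x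
  proof -
    have "L x \<noteq> {}" using gl that by (simp add: generic_lists_def)
    then show ?thesis using c by (auto simp: \<phi>_def intro: someI_ex)
  qed
  then have "proper_coloring V E \<alpha> \<phi>" using gl by (simp add: generic_lists_def)
  then have "\<phi> u \<noteq> \<phi> v" using \<open>{u, v} \<in> E\<close> by (simp add: proper_coloring_def)
  then show False by (simp add: \<phi>_def)
qed

lemma sum_card_generic_lists_clique_le:
  assumes gl: "generic_lists V E \<alpha> L" and "K \<subseteq> V"
    and clique: "\<And>u v. u \<in> K \<Longrightarrow> v \<in> K \<Longrightarrow> u \<noteq> v \<Longrightarrow> {u, v} \<in> E"
  shows "(\<Sum>v\<in>K. card (L v)) \<le> \<alpha>"
proof (cases "finite K")
  case True
  have L_sub: "L v \<subseteq> {1..\<alpha>}" if "v \<in> K" for v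
    using gl that \<open>K \<subseteq> V\<close> by (auto simp: generic_lists_def)
  have disjoint: "L u \<inter> L v = {}" if "u \<in> K" "v \<in> K" "u \<noteq> v" for u v
    using generic_lists_disjoint_if_edge[OF gl] clique that \<open>K \<subseteq> V\<close> by blast
  have "(\<Sum>v\<in>K. card (L v)) = card (\<Union>v\<in>K. L v)"
    using L_sub disjoint
    by (intro card_UN_disjoint[symmetric] True) (auto intro: finite_subset)
  also have "\<dots> \<le> card {1..\<alpha>}"
    using L_sub by (intro card_mono) auto
  finally show ?thesis by simp
qed simp

lemma clique_size_mult_Min_card_generic_lists_le:
  assumes gl: "generic_lists V E \<alpha> L" and "finite V" "K \<subseteq> V"
    and clique: "\<And>u v. u \<in> K \<Longrightarrow> v \<in> K \<Longrightarrow> u \<noteq> v \<Longrightarrow> {u, v} \<in> E"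
  shows "card K * Min ((\<lambda>v. card (L v)) ` V) \<le> \<alpha>"
proof -
  have "card K * Min ((\<lambda>v. card (L v)) ` V) = (\<Sum>v\<in>K. Min ((\<lambda>v. card (L v)) ` V))"
    by simp
  also have "\<dots> \<le> (\<Sum>v\<in>K. card (L v))"
    using \<open>finite V\<close> \<open>K \<subseteq> V\<close> by (intro sum_mono) auto
  also have "\<dots> \<le> \<alpha>"
    by (rule sum_card_generic_lists_clique_le[OF gl \<open>K \<subseteq> V\<close> clique])
  finally show ?thesis .
qed

lemma div_eq_iff_mem_atLeastLessThan:
  assumes "0 < (d::nat)"
  shows "u div d = k \<longleftrightarrow> u \<in> {k * d..<k * d + d}"
proof
  assume "u div d = k"
  then show "u \<in> {k * d..<k * d + d}"
    using dividend_less_div_times[OF assms, of u] div_times_less_eq_dividend[of u d]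
    by (simp add: add.commute)
next
  assume "u \<in> {k * d..<k * d + d}"
  then show "u div d = k"
    by (intro div_nat_eqI) (simp_all add: mult.commute)
qed

text \<open>\<open>m\<close> disjoint copies of the complete graph \<open>K\<^sub>d\<close>: vertex \<open>v < m * d\<close> lies in
  copy \<open>v div d\<close>.\<close>

definition clique_union_vertices :: "nat \<Rightarrow> nat \<Rightarrow> nat set" where
  "clique_union_vertices d m = {..<m * d}"

definition clique_union_edges :: "nat \<Rightarrow> nat \<Rightarrow> nat set set" where
  "clique_union_edges d m =
     {{u, v} | u v. u < m * d \<and> v < m * d \<and> u \<noteq> v \<and> u div d = v div d}"

lemma doubleton_mem_clique_union_edges_iff:
  "{u, v} \<in> clique_union_edges d m \<longleftrightarrow> u < m * d \<and> v < m * d \<and> u \<noteq> v \<and> u div d = v div d"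
  unfolding clique_union_edges_def by (auto simp: doubleton_eq_iff)

lemma card_clique_union_vertices [simp]: "card (clique_union_vertices d m) = m * d"
  by (simp add: clique_union_vertices_def)

lemma simple_graph_clique_union:
  "simple_graph (clique_union_vertices d m) (clique_union_edges d m)"
  unfolding simple_graph_def clique_union_vertices_def clique_union_edges_def by blast

lemma neighbours_clique_union:
  assumes "v < m * d"
  shows "{u. {u, v} \<in> clique_union_edges d m} = {v div d * d..<v div d * d + d} - {v}"
proof -
  have "0 < d" using assms by (cases d) auto
  have "v div d < m" using assms by (simp add: less_mult_imp_div_less)
  then have "v div d * d + d \<le> m * d"
    by (metis add.commute mult_Suc mult_le_mono1 Suc_leI)
  then show ?thesis
    using assms div_eq_iff_mem_atLeastLessThan[OF \<open>0 < d\<close>]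
    by (auto simp: doubleton_mem_clique_union_edges_iff)
qed

lemma degree_clique_union:
  assumes "v < m * d"
  shows "degree (clique_union_edges d m) v = d - 1"
proof -
  have "0 < d" using assms by (cases d) auto
  then have "v \<in> {v div d * d..<v div d * d + d}"
    using div_eq_iff_mem_atLeastLessThan by blast
  then show ?thesis
    unfolding degree_def neighbours_clique_union[OF assms] by simp
qed

lemma clique_union_vertices_nonempty:
  assumes "0 < m" "0 < d"
  shows "clique_union_vertices d m \<noteq> {}"
proof -
  have "0 \<in> clique_union_vertices d m"
    using assms by (simp add: clique_union_vertices_def)
  then show ?thesis by blast
qed

lemma max_degree_clique_union:
  assumes "0 < m" "0 < d"
  shows "max_degree (clique_union_vertices d m) (clique_union_edges d m) = d - 1"
proof -
  have "degree (clique_union_edges d m) ` clique_union_vertices d m =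
      (\<lambda>_. d - 1) ` clique_union_vertices d m"
    by (rule image_cong) (simp_all add: degree_clique_union clique_union_vertices_def)
  also have "\<dots> = {d - 1}"
    using clique_union_vertices_nonempty[OF assms] by (simp add: image_constant_conv)
  finally show ?thesis by (simp add: max_degree_def)
qed

lemma Min_card_generic_lists_clique_union_le:
  assumes gl: "generic_lists (clique_union_vertices d m) (clique_union_edges d m) \<alpha> L"
    and "0 < m" "0 < d"
  shows "real (Min ((\<lambda>v. card (L v)) ` clique_union_vertices d m)) \<le> real \<alpha> / real d"
proof -
  have "d \<le> m * d" using \<open>0 < m\<close> by simp
  then have "{..<d} \<subseteq> clique_union_vertices d m"
    by (auto simp: clique_union_vertices_def)
  moreover have "{u, v} \<in> clique_union_edges d m"
    if "u \<in> {..<d}" "v \<in> {..<d}" "u \<noteq> v" for u v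
  proof -
    have "u < m * d" "v < m * d" using that less_le_trans[OF _ \<open>d \<le> m * d\<close>] by auto
    then show ?thesis using that by (simp add: doubleton_mem_clique_union_edges_iff)
  qed
  ultimately have "d * Min ((\<lambda>v. card (L v)) ` clique_union_vertices d m) \<le> \<alpha>"
    using clique_size_mult_Min_card_generic_lists_le[OF gl _ _, of "{..<d}"]
    by (simp add: clique_union_vertices_def)
  with \<open>0 < d\<close> show ?thesis
    by (simp add: pos_le_divide_eq mult.commute flip: of_nat_mult)
qed

theorem theorem1:
  "\<exists>C::real. C > 0 \<and>
    (\<forall>\<Delta> \<alpha> :: nat. \<Delta> \<ge> 1 \<longrightarrow> \<alpha> > \<Delta> \<longrightarrow>
      (\<exists>F :: (nat set \<times> nat set set) set.
         infinite F \<and> (\<forall>n. \<exists>(V, E)\<in>F. card V \<ge> n) \<and>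
         (\<forall>(V, E)\<in>F. simple_graph V E \<and> V \<noteq> {} \<and> max_degree V E = \<Delta> \<and>
            (\<forall>L. generic_lists V E \<alpha> L \<longrightarrow>
                 real (Min ((\<lambda>v. card (L v)) ` V)) \<le> C * real \<alpha> / real \<Delta>))))"
proof (intro exI[of _ 1] conjI allI impI)
  fix \<Delta> \<alpha> :: nat
  assume "\<Delta> \<ge> 1" "\<alpha> > \<Delta>"
  define G where
    "G m = (clique_union_vertices (Suc \<Delta>) (Suc m), clique_union_edges (Suc \<Delta>) (Suc m))" for m
  have "inj G"
    by (rule injI, drule arg_cong[where f = "card \<circ> fst"])
      (simp add: G_def del: mult_Suc mult_Suc_right)
  then have "infinite (range G)"
    by (simp add: finite_image_iff)
  moreover have "\<exists>(V, E)\<in>range G. card V \<ge> n" for n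
    by (rule bexI[of _ "G n"]) (simp_all add: G_def)
  moreover have "real \<alpha> / real (Suc \<Delta>) \<le> real \<alpha> / real \<Delta>"
    using \<open>\<Delta> \<ge> 1\<close> by (simp add: frac_le)
  ultimately show "\<exists>F :: (nat set \<times> nat set set) set.
         infinite F \<and> (\<forall>n. \<exists>(V, E)\<in>F. card V \<ge> n) \<and>
         (\<forall>(V, E)\<in>F. simple_graph V E \<and> V \<noteq> {} \<and> max_degree V E = \<Delta> \<and>
            (\<forall>L. generic_lists V E \<alpha> L \<longrightarrow>
                 real (Min ((\<lambda>v. card (L v)) ` V)) \<le> 1 * real \<alpha> / real \<Delta>))"
    by (intro exI[of _ "range G"] conjI)
      (auto simp: G_def simple_graph_clique_union clique_union_vertices_nonempty
        max_degree_clique_union intro: order_trans[OF Min_card_generic_lists_clique_union_le])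
qed simp

end
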